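(* Let $\mathcal A$ be an arrangement of $d$ lines in $\mathbb P^2$ and let $m$ be the multiplicity of one of its intersection points. (i) If $\mathcal A$ is free with exponents $d_1\le d_2$ and $m>d/2$, then $m=d_2+1$. (ii) If $\mathcal A$ is nearly free with exponents $d_1\le d_2$ and $m\ge d/2$, then $m=d_2$.
   Context: The multiplicity of an intersection point is the number of lines through it. Let $S=\mathbb C[x,y,z]$, $f$ the product of the linear forms of the lines, and $AR(f)=\{(a,b,c)\in S^3: af_x+bf_y+cf_z=0\}$. $\mathcal A$ is free with exponents $d_1\le d_2$ if $AR(f)$ is a free $S$-module with homogeneous basis of degrees $d_1,d_2$; it is nearly free with exponents $d_1\le d_2$ if $AR(f)$ has a minimal graded free resolution $0\to S(-d_2-1)\to S(-d_1)\oplus S(-d_2)^2\to AR(f)\to 0$ with $d_1+d_2=d$. *)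

theory Defs
  imports Complex_Main "HOL-Library.Poly_Mapping" "HOL-Library.Product_Plus"
begin

text \<open>S = C[x,y,z]: polynomials as finitely supported maps from exponent
triples (i,j,k) (standing for x^i y^j z^k) to complex coefficients.\<close>

type_synonym mon3 = "nat \<times> nat \<times> nat"
type_synonym S = "mon3 \<Rightarrow>\<^sub>0 complex"
type_synonym S3 = "S \<times> S \<times> S"

definition varX :: S where "varX = Poly_Mapping.single (1,0,0) 1"
definition varY :: S where "varY = Poly_Mapping.single (0,1,0) 1"
definition varZ :: S where "varZ = Poly_Mapping.single (0,0,1) 1"

definition const :: "complex \<Rightarrow> S" where "const c = Poly_Mapping.single (0,0,0) c"

definition dX :: "S \<Rightarrow> S" where
  "dX p = (\<Sum>m\<in>Poly_Mapping.keys p. case m of (i,j,k) \<Rightarrow>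
            Poly_Mapping.single (i - 1, j, k) (of_nat i * Poly_Mapping.lookup p m))"
definition dY :: "S \<Rightarrow> S" where
  "dY p = (\<Sum>m\<in>Poly_Mapping.keys p. case m of (i,j,k) \<Rightarrow>
            Poly_Mapping.single (i, j - 1, k) (of_nat j * Poly_Mapping.lookup p m))"
definition dZ :: "S \<Rightarrow> S" where
  "dZ p = (\<Sum>m\<in>Poly_Mapping.keys p. case m of (i,j,k) \<Rightarrow>
            Poly_Mapping.single (i, j, k - 1) (of_nat k * Poly_Mapping.lookup p m))"

text \<open>Homogeneity (the zero polynomial is homogeneous of every degree).\<close>
definition tdeg :: "mon3 \<Rightarrow> nat" where "tdeg m = (case m of (i,j,k) \<Rightarrow> i + j + k)"
definition homog :: "nat \<Rightarrow> S \<Rightarrow> bool" where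
  "homog n p \<longleftrightarrow> (\<forall>m\<in>Poly_Mapping.keys p. tdeg m = n)"
definition homog3 :: "nat \<Rightarrow> S3 \<Rightarrow> bool" where
  "homog3 n r \<longleftrightarrow> (case r of (a,b,c) \<Rightarrow> homog n a \<and> homog n b \<and> homog n c)"

definition tsmul :: "S \<Rightarrow> S3 \<Rightarrow> S3" where
  "tsmul h r = (case r of (a,b,c) \<Rightarrow> (h*a, h*b, h*c))"
definition tadd :: "S3 \<Rightarrow> S3 \<Rightarrow> S3" where
  "tadd r s = (case r of (a,b,c) \<Rightarrow> case s of (a',b',c') \<Rightarrow> (a+a', b+b', c+c'))"

text \<open>Lines: a line is given by a nonzero linear form (a,b,c), i.e. a x + b y + c z.\<close>
type_synonym lform = "complex \<times> complex \<times> complex"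

definition lin_poly :: "lform \<Rightarrow> S" where
  "lin_poly l = (case l of (a,b,c) \<Rightarrow> const a * varX + const b * varY + const c * varZ)"

definition lin_eval :: "lform \<Rightarrow> lform \<Rightarrow> complex" where
  "lin_eval l p = (case l of (a,b,c) \<Rightarrow> case p of (x,y,z) \<Rightarrow> a*x + b*y + c*z)"

definition proportional :: "lform \<Rightarrow> lform \<Rightarrow> bool" where
  "proportional l l' \<longleftrightarrow> (\<exists>t::complex. t \<noteq> 0 \<and> l' = (t * fst l, t * fst (snd l), t * snd (snd l)))"

definition arrangement :: "lform list \<Rightarrow> bool" where
  "arrangement L \<longleftrightarrow> (\<forall>l\<in>set L. l \<noteq> (0,0,0)) \<and>
     (\<forall>i<length L. \<forall>j<length L. i \<noteq> j \<longrightarrow> \<not> proportional (L!i) (L!j))"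

definition defpoly :: "lform list \<Rightarrow> S" where
  "defpoly L = (\<Prod>l\<leftarrow>L. lin_poly l)"

text \<open>Multiplicity of a point p (nonzero vector representing a point of P^2).\<close>
definition mult_pt :: "lform list \<Rightarrow> lform \<Rightarrow> nat" where
  "mult_pt L p = card {i. i < length L \<and> lin_eval (L!i) p = 0}"

definition intersection_point :: "lform list \<Rightarrow> lform \<Rightarrow> bool" where
  "intersection_point L p \<longleftrightarrow> p \<noteq> (0,0,0) \<and> mult_pt L p \<ge> 2"

definition AR :: "S \<Rightarrow> S3 set" where
  "AR f = {(a,b,c). a * dX f + b * dY f + c * dZ f = 0}"

definition is_free :: "lform list \<Rightarrow> nat \<Rightarrow> nat \<Rightarrow> bool" where
  "is_free L d1 d2 \<longleftrightarrow> (let f = defpoly L in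
     \<exists>r1 r2. homog3 d1 r1 \<and> homog3 d2 r2 \<and> r1 \<in> AR f \<and> r2 \<in> AR f \<and>
       (\<forall>r\<in>AR f. \<exists>!pq. r = tadd (tsmul (fst pq) r1) (tsmul (snd pq) r2)))"

text \<open>Nearly free with exponents d1, d2: minimal graded free resolution
0 -> S(-d2-1) -> S(-d1) + S(-d2)^2 -> AR(f) -> 0 with d1 + d2 = d.
The generators r1, r2, r3 of degrees d1, d2, d2 generate AR(f); the module of
relations among them is free of rank one, generated by a homogeneous relation
(u,v,w) of degree d2+1 (so deg u = d2+1-d1, deg v = deg w = 1).  Minimality is
automatic since these degrees are positive.\<close>
definition is_nearly_free :: "lform list \<Rightarrow> nat \<Rightarrow> nat \<Rightarrow> bool" where
  "is_nearly_free L d1 d2 \<longleftrightarrow> d1 + d2 = length L \<and> (let f = defpoly L in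
     \<exists>r1 r2 r3. homog3 d1 r1 \<and> homog3 d2 r2 \<and> homog3 d2 r3 \<and>
       r1 \<in> AR f \<and> r2 \<in> AR f \<and> r3 \<in> AR f \<and>
       (\<forall>r\<in>AR f. \<exists>p q s. r = tadd (tsmul p r1) (tadd (tsmul q r2) (tsmul s r3))) \<and>
       (\<exists>u v w. homog (d2 + 1 - d1) u \<and> homog 1 v \<and> homog 1 w \<and>
          (\<forall>p q s. tadd (tsmul p r1) (tadd (tsmul q r2) (tsmul s r3)) = (0,0,0) \<longleftrightarrow>
                     (\<exists>h. (p,q,s) = (h*u, h*v, h*w))) \<and>
          (\<forall>h h'. (h*u, h*v, h*w) = (h'*u, h'*v, h'*w) \<longrightarrow> h = h')))"

end

theory Submission
  imports Defs "HOL-Computational_Algebra.Polynomial_Factorial" "HOL-Computational_Algebra.Field_as_Ring"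
begin

text \<open>Let \<open>g\<close> be the product of the \<open>m\<close> lines through \<open>p\<close> and \<open>h\<close> the product of the others,
  so \<open>f = g h\<close>; let \<open>E\<close> be the Euler field and \<open>\<partial>\<^sub>p\<close> the constant field \<open>p\<close>, which kills \<open>g\<close>.
  Then \<open>\<theta>\<^sub>0 = d h \<partial>\<^sub>p - (\<partial>\<^sub>p h) E\<close> is a syzygy of degree \<open>d - m\<close>.  For every syzygy \<open>r\<close>, each
  line through \<open>p\<close> divides \<open>det(p, x, r)\<close>, hence so does \<open>g\<close>; if the determinant vanishes, \<open>r\<close>
  is a combination of \<open>\<partial>\<^sub>p\<close> and \<open>E\<close>, and coprimality of \<open>h\<close> and \<open>\<partial>\<^sub>p h\<close> makes it a multiple
  of \<open>\<theta>\<^sub>0\<close>.  So there is no nonzero syzygy of degree \<open>k\<close> with \<open>k < d - m\<close> and \<open>k + 1 < m\<close>,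
  while \<open>\<theta>\<^sub>0\<close> forces a generator of degree at most \<open>d - m\<close>; for \<open>d < 2m\<close> this gives \<open>d\<^sub>1 = d - m\<close>.
  In the nearly free case \<open>d\<^sub>1 + d\<^sub>2 = d\<close> then gives \<open>d\<^sub>2\<close> (the boundary case \<open>d = 2m\<close> needs
  one more use of \<open>\<theta>\<^sub>0\<close>).  In the free case the cofactor of \<open>g\<close> in \<open>det(p, x, r\<^sub>2)\<close> divides
  \<open>m h\<close> and \<open>m \<partial>\<^sub>p h\<close>, since two further syzygies have determinants \<open>m g h\<close> and \<open>m g \<partial>\<^sub>p h\<close>;
  so it is a constant and \<open>d\<^sub>2 + 1 = m\<close>.\<close>

lemma poly_mapping_sum_single:
  "(p::'a \<Rightarrow>\<^sub>0 'b::comm_monoid_add) =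
     (\<Sum>m\<in>Poly_Mapping.keys p. Poly_Mapping.single m (Poly_Mapping.lookup p m))"
proof (rule poly_mapping_eqI)
  fix k
  show "Poly_Mapping.lookup p k = Poly_Mapping.lookup
      (\<Sum>m\<in>Poly_Mapping.keys p. Poly_Mapping.single m (Poly_Mapping.lookup p m)) k"
    by (cases "k \<in> Poly_Mapping.keys p") (auto simp: lookup_sum lookup_single when_def in_keys_iff)
qed

lemma poly_mapping_mult_expand:
  "(p::'a::comm_monoid_add \<Rightarrow>\<^sub>0 'b::comm_semiring_1) * q =
     (\<Sum>a\<in>Poly_Mapping.keys p. \<Sum>b\<in>Poly_Mapping.keys q.
        Poly_Mapping.single a (Poly_Mapping.lookup p a) * Poly_Mapping.single b (Poly_Mapping.lookup q b))"
  by (subst poly_mapping_sum_single[of p], subst poly_mapping_sum_single[of q]) (simp add: sum_product)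

definition lin_ext :: "('a \<Rightarrow> 'b::zero \<Rightarrow> 'c::comm_monoid_add) \<Rightarrow> ('a \<Rightarrow>\<^sub>0 'b) \<Rightarrow> 'c" where
  "lin_ext F p = (\<Sum>m\<in>Poly_Mapping.keys p. F m (Poly_Mapping.lookup p m))"

locale coeff_additive =
  fixes F :: "'a \<Rightarrow> 'b::comm_monoid_add \<Rightarrow> 'c::comm_monoid_add"
  assumes F_zero: "F m 0 = 0" and F_add: "F m (a + b) = F m a + F m b"
begin

lemma lin_ext_superset:
  "finite K \<Longrightarrow> Poly_Mapping.keys p \<subseteq> K \<Longrightarrow>
     lin_ext F p = (\<Sum>m\<in>K. F m (Poly_Mapping.lookup p m))"
  unfolding lin_ext_def by (rule sum.mono_neutral_left) (auto simp: in_keys_iff F_zero)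

lemma lin_ext_add: "lin_ext F (p + q) = lin_ext F p + lin_ext F q"
proof -
  let ?K = "Poly_Mapping.keys p \<union> Poly_Mapping.keys q"
  have "lin_ext F (p + q) = (\<Sum>m\<in>?K. F m (Poly_Mapping.lookup (p + q) m))"
    by (rule lin_ext_superset) (auto dest: subsetD[OF keys_add])
  also have "\<dots> = (\<Sum>m\<in>?K. F m (Poly_Mapping.lookup p m)) +
      (\<Sum>m\<in>?K. F m (Poly_Mapping.lookup q m))"
    by (simp add: lookup_add F_add sum.distrib)
  also have "\<dots> = lin_ext F p + lin_ext F q"
    using lin_ext_superset[of ?K p] lin_ext_superset[of ?K q] by simp
  finally show ?thesis .
qed

lemma lin_ext_zero [simp]: "lin_ext F 0 = 0"
  by (simp add: lin_ext_def)

lemma lin_ext_single [simp]: "lin_ext F (Poly_Mapping.single m c) = F m c"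
  by (cases "c = 0") (auto simp: lin_ext_def F_zero)

lemma lin_ext_sum: "lin_ext F (sum f A) = (\<Sum>x\<in>A. lin_ext F (f x))"
  by (induction A rule: infinite_finite_induct) (auto simp: lin_ext_add)

end

lemma lin_ext_mult:
  fixes F :: "'a::comm_monoid_add \<Rightarrow> 'b::comm_semiring_1 \<Rightarrow> 'c::comm_monoid_add"
  assumes "coeff_additive F"
  shows "lin_ext F (p * q) = (\<Sum>a\<in>Poly_Mapping.keys p. \<Sum>b\<in>Poly_Mapping.keys q.
    F (a + b) (Poly_Mapping.lookup p a * Poly_Mapping.lookup q b))"
  by (subst poly_mapping_mult_expand)
     (simp add: coeff_additive.lin_ext_sum[OF assms] coeff_additive.lin_ext_single[OF assms]
       mult_single)

lemma plus_triple: "((a::nat), (b::nat), (c::nat)) + (a', b', c') = (a + a', b + b', c + c')"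
  by (simp add: plus_prod_def)

lemma zero_mon3: "(0::mon3) = (0, 0, 0)"
  by (simp add: zero_prod_def)

lemma tdeg_add: "tdeg (a + b) = tdeg a + tdeg b"
  by (cases a; cases b) (simp add: tdeg_def plus_triple)

lemma homog_0 [simp]: "homog k 0"
  by (simp add: homog_def)

lemma homog_add: "homog k p \<Longrightarrow> homog k q \<Longrightarrow> homog k (p + q)"
  unfolding homog_def using keys_add[of p q] by auto

lemma homog_uminus: "homog k p \<Longrightarrow> homog k (- p)"
  unfolding homog_def by (simp add: keys_minus)

lemma homog_diff: "homog k p \<Longrightarrow> homog k q \<Longrightarrow> homog k (p - q)"
  using homog_add[of k p "- q"] homog_uminus[of k q] by simp

lemma homog_mult:
  assumes "homog a p" "homog b q"
  shows "homog (a + b) (p * q)"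
  unfolding homog_def
proof
  fix m assume "m \<in> Poly_Mapping.keys (p * q)"
  then obtain x y where "m = x + y" "x \<in> Poly_Mapping.keys p" "y \<in> Poly_Mapping.keys q"
    using keys_mult[of p q] by auto
  then show "tdeg m = a + b"
    using assms by (simp add: homog_def tdeg_add)
qed

lemma homog_single: "tdeg m = k \<Longrightarrow> homog k (Poly_Mapping.single m c)"
  by (simp add: homog_def)

lemma homog_sum: "(\<And>x. x \<in> A \<Longrightarrow> homog k (f x)) \<Longrightarrow> homog k (sum f A)"
  by (induction A rule: infinite_finite_induct) (auto intro: homog_add)

lemma homog_1: "homog 0 (1::S)"
  by (simp add: homog_def tdeg_def zero_mon3)

section \<open>Partial derivatives and vector fields\<close>

text \<open>The three partial derivatives share one construction: the variable is described by its
  exponent \<open>expo\<close> in a monomial and by \<open>lower\<close>, which decreases that exponent by one.\<close>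

locale monomial_derivative =
  fixes expo :: "mon3 \<Rightarrow> nat" and lower :: "mon3 \<Rightarrow> mon3"
  assumes expo_add: "expo (a + b) = expo a + expo b"
    and lower_add: "expo a \<noteq> 0 \<Longrightarrow> lower (a + b) = lower a + b"
    and tdeg_lower: "expo a \<noteq> 0 \<Longrightarrow> tdeg (lower a) + 1 = tdeg a"
begin

definition mono_deriv :: "mon3 \<Rightarrow> complex \<Rightarrow> S" where
  "mono_deriv m c = Poly_Mapping.single (lower m) (of_nat (expo m) * c)"

definition deriv :: "S \<Rightarrow> S" where
  "deriv = lin_ext mono_deriv"

sublocale coeff_additive mono_deriv
  by standard (auto simp: mono_deriv_def distrib_left single_add)

lemma deriv_add: "deriv (p + q) = deriv p + deriv q"
  by (simp add: deriv_def lin_ext_add)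

lemma deriv_single: "deriv (Poly_Mapping.single m c) = mono_deriv m c"
  by (simp add: deriv_def)

lemma mono_deriv_leibniz:
  "mono_deriv (a + b) (c * e) =
     mono_deriv a c * Poly_Mapping.single b e + Poly_Mapping.single a c * mono_deriv b e"
proof -
  have lower_add': "expo b \<noteq> 0 \<Longrightarrow> lower (a + b) = a + lower b"
    using lower_add[of b a] by (simp add: add.commute)
  consider "expo a = 0" "expo b = 0" | "expo a = 0" "expo b \<noteq> 0" | "expo a \<noteq> 0" "expo b = 0"
    | "expo a \<noteq> 0" "expo b \<noteq> 0"
    by blast
  then show ?thesis
  proof cases
    case 4
    then have "lower (a + b) = lower a + b" "lower (a + b) = a + lower b"
      using lower_add lower_add' by auto
    with 4 show ?thesis
      by (simp add: mono_deriv_def mult_single expo_add algebra_simps flip: single_add)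
  qed (simp_all add: mono_deriv_def mult_single expo_add lower_add lower_add' algebra_simps)
qed

lemma deriv_mult: "deriv (p * q) = deriv p * q + p * deriv q"
proof -
  have "deriv (p * q) = (\<Sum>a\<in>Poly_Mapping.keys p. \<Sum>b\<in>Poly_Mapping.keys q.
      mono_deriv a (Poly_Mapping.lookup p a) * Poly_Mapping.single b (Poly_Mapping.lookup q b) +
      Poly_Mapping.single a (Poly_Mapping.lookup p a) * mono_deriv b (Poly_Mapping.lookup q b))"
    unfolding deriv_def lin_ext_mult[OF coeff_additive_axioms] by (simp add: mono_deriv_leibniz)
  also have "\<dots> = deriv p * q + p * deriv q"
    by (subst (3 4) poly_mapping_sum_single)
       (simp add: deriv_def lin_ext_def sum.distrib sum_product)
  finally show ?thesis .
qed

lemma expo_zero_of_tdeg_zero: "tdeg m = 0 \<Longrightarrow> expo m = 0"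
  using tdeg_lower[of m] by linarith

lemma homog_deriv:
  assumes "homog k p"
  shows "homog (k - 1) (deriv p)" and "k = 0 \<Longrightarrow> deriv p = 0"
proof -
  have monomial: "homog (k - 1) (mono_deriv m c) \<and> (k = 0 \<longrightarrow> mono_deriv m c = 0)"
    if "tdeg m = k" for m c
    using that tdeg_lower[of m] expo_zero_of_tdeg_zero[of m]
    by (cases "expo m = 0") (auto simp: mono_deriv_def intro!: homog_single)
  have "tdeg m = k" if "m \<in> Poly_Mapping.keys p" for m
    using assms that by (simp add: homog_def)
  then show "homog (k - 1) (deriv p)" and "k = 0 \<Longrightarrow> deriv p = 0"
    using monomial unfolding deriv_def lin_ext_def by (auto intro!: homog_sum sum.neutral)
qed

end

interpretation X: monomial_derivative "\<lambda>(i, j, k). i" "\<lambda>(i, j, k). (i - 1, j, k)"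
  by standard (auto simp: plus_triple tdeg_def split: prod.splits)

interpretation Y: monomial_derivative "\<lambda>(i, j, k). j" "\<lambda>(i, j, k). (i, j - 1, k)"
  by standard (auto simp: plus_triple tdeg_def split: prod.splits)

interpretation Z: monomial_derivative "\<lambda>(i, j, k). k" "\<lambda>(i, j, k). (i, j, k - 1)"
  by standard (auto simp: plus_triple tdeg_def split: prod.splits)

lemma dX_eq: "dX = X.deriv"
  unfolding dX_def X.deriv_def lin_ext_def X.mono_deriv_def
  by (intro ext sum.cong) (auto split: prod.splits)

lemma dY_eq: "dY = Y.deriv"
  unfolding dY_def Y.deriv_def lin_ext_def Y.mono_deriv_def
  by (intro ext sum.cong) (auto split: prod.splits)

lemma dZ_eq: "dZ = Z.deriv"
  unfolding dZ_def Z.deriv_def lin_ext_def Z.mono_deriv_def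
  by (intro ext sum.cong) (auto split: prod.splits)

lemma dX_add: "dX (p + q) = dX p + dX q"
  and dY_add: "dY (p + q) = dY p + dY q"
  and dZ_add: "dZ (p + q) = dZ p + dZ q"
  unfolding dX_eq dY_eq dZ_eq by (rule X.deriv_add Y.deriv_add Z.deriv_add)+

lemma dX_mult: "dX (p * q) = dX p * q + p * dX q"
  and dY_mult: "dY (p * q) = dY p * q + p * dY q"
  and dZ_mult: "dZ (p * q) = dZ p * q + p * dZ q"
  unfolding dX_eq dY_eq dZ_eq by (rule X.deriv_mult Y.deriv_mult Z.deriv_mult)+

lemma dX_single: "dX (Poly_Mapping.single (i, j, k) c) = Poly_Mapping.single (i - 1, j, k) (of_nat i * c)"
  and dY_single: "dY (Poly_Mapping.single (i, j, k) c) = Poly_Mapping.single (i, j - 1, k) (of_nat j * c)"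
  and dZ_single: "dZ (Poly_Mapping.single (i, j, k) c) = Poly_Mapping.single (i, j, k - 1) (of_nat k * c)"
  unfolding dX_eq dY_eq dZ_eq X.deriv_single Y.deriv_single Z.deriv_single
    X.mono_deriv_def Y.mono_deriv_def Z.mono_deriv_def
  by simp_all

lemma homog_dX: "homog k p \<Longrightarrow> homog (k - 1) (dX p)"
  and homog_dY: "homog k p \<Longrightarrow> homog (k - 1) (dY p)"
  and homog_dZ: "homog k p \<Longrightarrow> homog (k - 1) (dZ p)"
  unfolding dX_eq dY_eq dZ_eq by (rule X.homog_deriv Y.homog_deriv Z.homog_deriv; assumption)+

lemma dX_homog_0: "homog 0 p \<Longrightarrow> dX p = 0"
  and dY_homog_0: "homog 0 p \<Longrightarrow> dY p = 0"
  and dZ_homog_0: "homog 0 p \<Longrightarrow> dZ p = 0"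
  unfolding dX_eq dY_eq dZ_eq by (rule X.homog_deriv Y.homog_deriv Z.homog_deriv; simp)+

lemma homog_mult_dX: "homog 1 v \<Longrightarrow> homog k p \<Longrightarrow> homog k (v * dX p)"
  and homog_mult_dY: "homog 1 v \<Longrightarrow> homog k p \<Longrightarrow> homog k (v * dY p)"
  and homog_mult_dZ: "homog 1 v \<Longrightarrow> homog k p \<Longrightarrow> homog k (v * dZ p)"
  using homog_mult[of 1 v "k - 1"] homog_dX[of k p] homog_dY[of k p] homog_dZ[of k p]
    dX_homog_0[of p] dY_homog_0[of p] dZ_homog_0[of p]
  by (cases "k = 0"; simp)+

lemma const_mult: "const a * const b = const (a * b)"
  by (simp add: const_def mult_single)

lemma const_add: "const a + const b = const (a + b)"
  by (simp add: const_def single_add)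

lemma const_1 [simp]: "const 1 = 1"
  by (simp add: const_def flip: zero_mon3)

lemma const_uminus: "const (- a) = - const a"
  by (simp add: const_def single_uminus)

lemma of_nat_eq_const: "(of_nat n :: S) = const (of_nat n)"
  by (simp add: const_def flip: zero_mon3)

lemma const_eq_0_iff [simp]: "const c = 0 \<longleftrightarrow> c = 0"
  by (metis const_def lookup_single_eq single_zero lookup_zero)

lemma const_mult_inverse: "c \<noteq> 0 \<Longrightarrow> const c * const (1 / c) = 1"
  by (simp add: const_mult)

lemma dvd_mult_const_imp_dvd:
  assumes "(q::S) dvd a * const c" "c \<noteq> 0"
  shows "q dvd a"
proof -
  have "q dvd a * const c * const (1 / c)"
    using assms(1) by simp
  also have "a * const c * const (1 / c) = a"
    using const_mult_inverse[OF assms(2)] by (simp add: mult.assoc)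
  finally show ?thesis .
qed

lemma homog_const: "homog 0 (const c)"
  by (simp add: const_def homog_single tdeg_def)

lemma homog_const_mult: "homog k q \<Longrightarrow> homog k (const c * q)"
  using homog_mult[OF homog_const] by fastforce

lemma homog_varX: "homog 1 varX"
  and homog_varY: "homog 1 varY"
  and homog_varZ: "homog 1 varZ"
  by (simp_all add: varX_def varY_def varZ_def homog_single tdeg_def)

lemma lin_poly_single:
  "lin_poly (a, b, c) = Poly_Mapping.single (1, 0, 0) a + Poly_Mapping.single (0, 1, 0) b +
     Poly_Mapping.single (0, 0, 1) c"
  by (simp add: lin_poly_def const_def varX_def varY_def varZ_def mult_single zero_mon3 plus_triple)

lemma homog_lin_poly: "homog 1 (lin_poly l)"
  by (cases l) (auto simp: lin_poly_single tdeg_def intro!: homog_add homog_single)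

lemma lookup_lin_poly:
  "Poly_Mapping.lookup (lin_poly (a, b, c)) (1, 0, 0) = a"
  "Poly_Mapping.lookup (lin_poly (a, b, c)) (0, 1, 0) = b"
  "Poly_Mapping.lookup (lin_poly (a, b, c)) (0, 0, 1) = c"
  by (simp_all add: lin_poly_single lookup_add lookup_single)

lemma lin_poly_inj: "lin_poly l = lin_poly l' \<Longrightarrow> l = l'"
  by (cases l; cases l') (metis lookup_lin_poly)

lemma lin_poly_eq_0_iff [simp]: "lin_poly l = 0 \<longleftrightarrow> l = (0, 0, 0)"
  using lin_poly_inj[of l "(0, 0, 0)"] by (auto simp: lin_poly_single)

lemma const_mult_lin_poly: "const t * lin_poly (a, b, c) = lin_poly (t * a, t * b, t * c)"
  by (simp add: lin_poly_def algebra_simps flip: const_mult)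

lemma dX_lin_poly: "dX (lin_poly (a, b, c)) = const a"
  and dY_lin_poly: "dY (lin_poly (a, b, c)) = const b"
  and dZ_lin_poly: "dZ (lin_poly (a, b, c)) = const c"
  by (simp_all add: lin_poly_single dX_add dY_add dZ_add dX_single dY_single dZ_single const_def)

lemma dX_const: "dX (const c) = 0"
  and dY_const: "dY (const c) = 0"
  and dZ_const: "dZ (const c) = 0"
  by (simp_all add: const_def dX_single dY_single dZ_single)

definition deriv_along :: "S3 \<Rightarrow> S \<Rightarrow> S" where
  "deriv_along r q = (case r of (a, b, c) \<Rightarrow> a * dX q + b * dY q + c * dZ q)"

lemma deriv_along_triple: "deriv_along (a, b, c) q = a * dX q + b * dY q + c * dZ q"
  by (simp add: deriv_along_def)

lemma mem_AR_iff: "r \<in> AR f \<longleftrightarrow> deriv_along r f = 0"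
  by (cases r) (simp add: AR_def deriv_along_def)

lemma deriv_along_mult: "deriv_along r (p * q) = deriv_along r p * q + p * deriv_along r q"
  by (cases r) (simp add: deriv_along_def dX_mult dY_mult dZ_mult algebra_simps)

lemma deriv_along_1: "deriv_along r 1 = 0"
  using dX_const[of 1] dY_const[of 1] dZ_const[of 1] by (cases r) (simp add: deriv_along_def)

lemma deriv_along_lin_poly:
  "deriv_along (r1, r2, r3) (lin_poly (a, b, c)) = r1 * const a + r2 * const b + r3 * const c"
  by (simp add: deriv_along_def dX_lin_poly dY_lin_poly dZ_lin_poly)

lemma deriv_along_tadd: "deriv_along (tadd r s) q = deriv_along r q + deriv_along s q"
  by (cases r; cases s) (simp add: deriv_along_def tadd_def algebra_simps)

lemma deriv_along_tsmul: "deriv_along (tsmul w r) q = w * deriv_along r q"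
  by (cases r) (simp add: deriv_along_def tsmul_def algebra_simps)

lemma deriv_along_zero [simp]: "deriv_along (0, 0, 0) q = 0"
  by (simp add: deriv_along_def)

lemma tsmul_tadd_tsmul:
  "tsmul c (tadd (tsmul a r) (tsmul b s)) = tadd (tsmul (c * a) r) (tsmul (c * b) s)"
  by (cases r; cases s) (simp add: tadd_def tsmul_def algebra_simps)

lemma tsmul_0 [simp]: "tsmul 0 r = (0, 0, 0)"
  and tsmul_1 [simp]: "tsmul 1 r = r"
  and tsmul_zero [simp]: "tsmul w (0, 0, 0) = (0, 0, 0)"
  and tadd_zero_left [simp]: "tadd (0, 0, 0) r = r"
  and tadd_zero_right [simp]: "tadd r (0, 0, 0) = r"
  by (cases r; simp add: tsmul_def tadd_def)+

section \<open>Homogeneous components\<close>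

definition hcomp_mono :: "nat \<Rightarrow> mon3 \<Rightarrow> complex \<Rightarrow> S" where
  "hcomp_mono k m c = (if tdeg m = k then Poly_Mapping.single m c else 0)"

interpretation hcomp_mono: coeff_additive "hcomp_mono k"
  by standard (auto simp: hcomp_mono_def single_add)

definition hcomp :: "nat \<Rightarrow> S \<Rightarrow> S" where
  "hcomp k = lin_ext (hcomp_mono k)"

lemma hcomp_add: "hcomp k (p + q) = hcomp k p + hcomp k q"
  by (simp add: hcomp_def hcomp_mono.lin_ext_add)

lemma homog_hcomp: "homog k (hcomp k p)"
  unfolding hcomp_def lin_ext_def hcomp_mono_def by (rule homog_sum) (auto simp: homog_single)

lemma hcomp_homog: "homog k p \<Longrightarrow> hcomp k p = p"
  unfolding hcomp_def lin_ext_def hcomp_mono_def homog_def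
  by (subst (2) poly_mapping_sum_single) (rule sum.cong, auto)

lemma hcomp_mult_homog:
  assumes "homog e r"
  shows "hcomp k (a * r) = (if e \<le> k then hcomp (k - e) a * r else 0)"
proof -
  have deg_r: "tdeg b = e" if "b \<in> Poly_Mapping.keys r" for b
    using assms that by (simp add: homog_def)
  have "hcomp k (a * r) = (\<Sum>x\<in>Poly_Mapping.keys a. \<Sum>y\<in>Poly_Mapping.keys r.
     (if e \<le> k then hcomp_mono (k - e) x (Poly_Mapping.lookup a x) else 0) *
       Poly_Mapping.single y (Poly_Mapping.lookup r y))"
    unfolding hcomp_def lin_ext_mult[OF hcomp_mono.coeff_additive_axioms]
    by (intro sum.cong refl) (auto simp: hcomp_mono_def mult_single tdeg_add deg_r)
  also have "\<dots> = (if e \<le> k then hcomp (k - e) a * r else 0)"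
    by (subst (4) poly_mapping_sum_single) (simp add: hcomp_def lin_ext_def sum_product)
  finally show ?thesis .
qed

lemma hcomp_0_eq_const: "hcomp 0 w = const (Poly_Mapping.lookup w (0, 0, 0))"
proof -
  have "hcomp 0 w = (\<Sum>m\<in>Poly_Mapping.keys w.
      if m = (0, 0, 0) then Poly_Mapping.single m (Poly_Mapping.lookup w m) else 0)"
    unfolding hcomp_def lin_ext_def hcomp_mono_def
    by (rule sum.cong) (auto simp: tdeg_def split: prod.splits)
  also have "\<dots> = const (Poly_Mapping.lookup w (0, 0, 0))"
    by (auto simp: const_def in_keys_iff)
  finally show ?thesis .
qed

lemma homog_unit_imp_deg_0:
  assumes "homog k u" "u * v = 1"
  shows "k = 0"
proof (rule ccontr)
  assume "k \<noteq> 0"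
  then have "hcomp 0 (v * u) = 0"
    using hcomp_mult_homog[OF assms(1), of 0 v] by simp
  then show False
    using assms(2) hcomp_homog[OF homog_1] by (simp add: mult.commute)
qed

section \<open>Unique factorisation\<close>

text \<open>\<open>S\<close> is identified with \<open>\<complex>[x][y][z]\<close>, whose factoriality is in the library.\<close>

type_synonym poly3 = "complex poly poly poly"

definition monom3 :: "mon3 \<Rightarrow> complex \<Rightarrow> poly3" where
  "monom3 m c = (case m of (i, j, k) \<Rightarrow> monom (monom (monom c i) j) k)"

interpretation monom3: coeff_additive monom3
  by standard (auto simp: monom3_def add_monom split: prod.splits)

definition to_poly3 :: "S \<Rightarrow> poly3" where
  "to_poly3 = lin_ext monom3"

lemma to_poly3_mult: "to_poly3 (p * q) = to_poly3 p * to_poly3 q"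
proof -
  have monom3_mult: "monom3 (a + b) (c * e) = monom3 a c * monom3 b e" for a b c e
    by (cases a; cases b) (simp add: monom3_def plus_triple mult_monom)
  show ?thesis
    unfolding to_poly3_def lin_ext_mult[OF monom3.coeff_additive_axioms]
    by (simp add: monom3_mult lin_ext_def sum_product)
qed

lemma coeff_to_poly3:
  "coeff (coeff (coeff (to_poly3 p) k) j) i = Poly_Mapping.lookup p (i, j, k)"
proof -
  have "coeff (coeff (coeff (to_poly3 p) k) j) i =
      (\<Sum>m\<in>Poly_Mapping.keys p. if m = (i, j, k) then Poly_Mapping.lookup p m else 0)"
    unfolding to_poly3_def lin_ext_def coeff_sum
    by (rule sum.cong) (auto simp: monom3_def split: prod.splits)
  also have "\<dots> = Poly_Mapping.lookup p (i, j, k)"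
    by (auto simp: in_keys_iff)
  finally show ?thesis .
qed

lemma to_poly3_inj: "to_poly3 p = to_poly3 q \<Longrightarrow> p = q"
  by (rule poly_mapping_eqI) (metis coeff_to_poly3 prod_cases3)

lemma to_poly3_surj: "\<exists>s. to_poly3 s = P"
proof -
  let ?c = "\<lambda>i j k. coeff (coeff (coeff P k) j) i"
  let ?s = "\<Sum>k\<le>degree P. \<Sum>j\<le>degree (coeff P k). \<Sum>i\<le>degree (coeff (coeff P k) j).
               Poly_Mapping.single (i, j, k) (?c i j k)"
  have "to_poly3 ?s = (\<Sum>k\<le>degree P. monom (\<Sum>j\<le>degree (coeff P k).
      monom (\<Sum>i\<le>degree (coeff (coeff P k) j). monom (?c i j k) i) j) k)"
    by (simp add: to_poly3_def monom3.lin_ext_sum monom3_def monom_sum)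
  also have "\<dots> = P"
    by (simp only: poly_as_sum_of_monoms)
  finally show ?thesis by blast
qed

lemma S_mult_eq_0_iff [simp]: "(a::S) * b = 0 \<longleftrightarrow> a = 0 \<or> b = 0"
  using to_poly3_mult[of a b] to_poly3_inj[of _ 0] by (auto simp: to_poly3_def)

lemma S_mult_left_cancel: "(a::S) \<noteq> 0 \<Longrightarrow> a * b = a * c \<Longrightarrow> b = c"
  using S_mult_eq_0_iff[of a "b - c"] by (simp add: right_diff_distrib)

lemma to_poly3_dvd_iff: "to_poly3 a dvd to_poly3 b \<longleftrightarrow> a dvd b"
proof
  assume "to_poly3 a dvd to_poly3 b"
  then obtain C where "to_poly3 b = to_poly3 a * C"
    by (auto elim: dvdE)
  moreover obtain c where "to_poly3 c = C"
    using to_poly3_surj by blast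
  ultimately have "b = a * c"
    by (intro to_poly3_inj) (simp add: to_poly3_mult)
  then show "a dvd b" by simp
qed (auto simp: to_poly3_mult elim!: dvdE)

lemma to_poly3_lin_poly:
  "to_poly3 (lin_poly (a, b, c)) = [:[:[:0, a:], [:b:]:], [:[:c:]:]:]"
  by (simp add: lin_poly_single to_poly3_def monom3.lin_ext_add monom3_def monom_0 monom_Suc
      One_nat_def)

lemma irreducible_to_poly3_lin_poly:
  assumes "l \<noteq> (0, 0, 0)"
  shows "irreducible (to_poly3 (lin_poly l))"
proof -
  obtain a b c where l: "l = (a, b, c)" by (cases l)
  consider "c \<noteq> 0" | "c = 0" "b \<noteq> 0" | "c = 0" "b = 0" "a \<noteq> 0"
    using assms l by auto
  then show ?thesis
  proof cases
    case 1
    then show ?thesis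
      unfolding l to_poly3_lin_poly
      by (intro irreducible_linear_poly is_unit_right_imp_coprime)
         (auto simp: is_unit_const_poly_iff dvd_field_iff)
  next
    case 2
    then show ?thesis
      unfolding l to_poly3_lin_poly
      by (simp add: irreducible_const_poly_iff, intro irreducible_linear_poly is_unit_right_imp_coprime)
         (auto simp: is_unit_const_poly_iff dvd_field_iff)
  next
    case 3
    then show ?thesis
      unfolding l to_poly3_lin_poly
      by (simp add: irreducible_const_poly_iff irreducible_linear_field_poly)
  qed
qed

lemma lin_poly_prime:
  assumes "l \<noteq> (0, 0, 0)" "lin_poly l dvd a * b"
  shows "lin_poly l dvd a \<or> lin_poly l dvd b"
proof -
  have "prime_elem (to_poly3 (lin_poly l))"
    using irreducible_to_poly3_lin_poly[OF assms(1)] by (simp add: prime_elem_iff_irreducible)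
  moreover have "to_poly3 (lin_poly l) dvd to_poly3 a * to_poly3 b"
    using assms(2) by (simp add: to_poly3_dvd_iff flip: to_poly3_mult)
  ultimately show ?thesis
    by (simp add: prime_elem_dvd_mult_iff to_poly3_dvd_iff)
qed

section \<open>Products of linear forms\<close>

lemma proportional_sym:
  assumes "proportional l l'"
  shows "proportional l' l"
proof -
  obtain t where "t \<noteq> 0" "l' = (t * fst l, t * fst (snd l), t * snd (snd l))"
    using assms by (auto simp: proportional_def)
  then show ?thesis
    unfolding proportional_def by (intro exI[of _ "1 / t"]) auto
qed

lemma sorted_wrt_nonproportional_remove1:
  assumes "sorted_wrt (\<lambda>l l'. \<not> proportional l l') xs" "l \<in> set xs" "l' \<in> set (remove1 l xs)"
  shows "\<not> proportional l l'"
  using assms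
proof (induction xs)
  case (Cons x xs)
  then show ?case
    by (cases "x = l"; cases "l' = x") (auto dest: proportional_sym notin_set_remove1)
qed simp

lemma defpoly_Nil [simp]: "defpoly [] = 1"
  and defpoly_Cons [simp]: "defpoly (l # ls) = lin_poly l * defpoly ls"
  by (simp_all add: defpoly_def)

lemma defpoly_remove1: "l \<in> set ls \<Longrightarrow> defpoly ls = lin_poly l * defpoly (remove1 l ls)"
  by (induction ls) (auto simp: algebra_simps)

lemma defpoly_filter: "defpoly ls = defpoly (filter P ls) * defpoly (filter (\<lambda>l. \<not> P l) ls)"
  by (induction ls) (auto simp: algebra_simps)

lemma homog_defpoly: "homog (length ls) (defpoly ls)"
  by (induction ls) (auto simp: homog_1 dest: homog_mult[OF homog_lin_poly])

lemma defpoly_nonzero: "\<forall>l\<in>set ls. l \<noteq> (0, 0, 0) \<Longrightarrow> defpoly ls \<noteq> 0"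
  by (induction ls) auto

lemma deriv_along_defpoly_eq_0:
  "\<forall>l\<in>set ls. deriv_along r (lin_poly l) = 0 \<Longrightarrow> deriv_along r (defpoly ls) = 0"
  by (induction ls) (auto simp: deriv_along_mult deriv_along_1)

definition euler :: S3 where
  "euler = (varX, varY, varZ)"

lemma deriv_along_euler_lin_poly: "deriv_along euler (lin_poly l) = lin_poly l"
  by (cases l) (simp only: euler_def deriv_along_lin_poly, simp add: lin_poly_def algebra_simps)

lemma deriv_along_euler_defpoly: "deriv_along euler (defpoly ls) = of_nat (length ls) * defpoly ls"
  by (induction ls) (auto simp: deriv_along_mult deriv_along_1 deriv_along_euler_lin_poly algebra_simps)

lemma lin_poly_not_unit: "\<not> lin_poly l dvd 1"
proof
  assume "lin_poly l dvd 1"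
  then obtain v where "1 = lin_poly l * v" ..
  then show False
    using homog_unit_imp_deg_0[OF homog_lin_poly, of l v] by simp
qed

lemma lin_poly_dvd_imp_proportional:
  assumes "l' \<noteq> (0, 0, 0)" "lin_poly l dvd lin_poly l'"
  shows "proportional l l'"
proof -
  obtain w where w: "lin_poly l' = w * lin_poly l"
    using assms(2) by (auto elim!: dvdE simp: mult.commute)
  define t where "t = Poly_Mapping.lookup w (0, 0, 0)"
  obtain a b c where l: "l = (a, b, c)" by (cases l)
  have "lin_poly l' = hcomp 1 (w * lin_poly l)"
    unfolding w[symmetric] by (rule hcomp_homog[OF homog_lin_poly, symmetric])
  also have "\<dots> = lin_poly (t * a, t * b, t * c)"
    by (simp add: hcomp_mult_homog[OF homog_lin_poly] hcomp_0_eq_const t_def l const_mult_lin_poly)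
  finally have "l' = (t * a, t * b, t * c)"
    by (rule lin_poly_inj)
  with assms(1) show ?thesis
    by (auto simp: proportional_def l)
qed

lemma lin_poly_dvd_defpoly_imp_proportional:
  assumes "l \<noteq> (0, 0, 0)" "\<forall>l'\<in>set ls. l' \<noteq> (0, 0, 0)" "lin_poly l dvd defpoly ls"
  shows "\<exists>l'\<in>set ls. proportional l l'"
  using assms(2,3)
proof (induction ls)
  case Nil
  then show ?case using lin_poly_not_unit by simp
next
  case (Cons l' ls)
  then have "lin_poly l dvd lin_poly l' \<or> lin_poly l dvd defpoly ls"
    using lin_poly_prime[OF assms(1)] by simp
  moreover have "lin_poly l dvd lin_poly l' \<Longrightarrow> proportional l l'"
    using Cons.prems(1) by (intro lin_poly_dvd_imp_proportional) auto
  ultimately show ?case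
    using Cons.IH Cons.prems(1) by auto
qed

lemma defpoly_dvd:
  assumes "sorted_wrt (\<lambda>l l'. \<not> proportional l l') ls" "\<forall>l\<in>set ls. l \<noteq> (0, 0, 0)"
    and "\<forall>l\<in>set ls. lin_poly l dvd q"
  shows "defpoly ls dvd q"
  using assms
proof (induction ls arbitrary: q)
  case (Cons l ls)
  have "defpoly ls dvd q"
    using Cons by simp
  then obtain w where w: "q = defpoly ls * w" ..
  have "\<not> lin_poly l dvd defpoly ls"
  proof
    assume "lin_poly l dvd defpoly ls"
    then obtain l' where "l' \<in> set ls" "proportional l l'"
      using lin_poly_dvd_defpoly_imp_proportional[of l ls] Cons.prems(2) by auto
    then show False
      using Cons.prems(1) by simp
  qed
  moreover have "lin_poly l dvd defpoly ls * w"
    using Cons.prems w by simp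
  moreover have "l \<noteq> (0, 0, 0)"
    using Cons.prems(2) by simp
  ultimately have "lin_poly l dvd w"
    using lin_poly_prime by blast
  then obtain w' where "w = lin_poly l * w'" ..
  then have "q = defpoly (l # ls) * w'"
    using w by (simp add: algebra_simps)
  then show ?case ..
qed simp

lemma dvd_defpoly_cases:
  assumes "\<forall>l\<in>set ls. l \<noteq> (0, 0, 0)" "\<psi> dvd defpoly ls"
  shows "\<psi> dvd 1 \<or> (\<exists>l\<in>set ls. lin_poly l dvd \<psi>)"
  using assms
proof (induction ls arbitrary: \<psi>)
  case (Cons l ls)
  from Cons.prems(2) obtain e where e: "lin_poly l * defpoly ls = \<psi> * e"
    by (auto simp only: defpoly_Cons elim: dvdE)
  have "lin_poly l dvd \<psi> * e"
    unfolding e[symmetric] by simp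
  then have "lin_poly l dvd \<psi> \<or> lin_poly l dvd e"
    using lin_poly_prime[of l \<psi> e] Cons.prems(1) by simp
  then show ?case
  proof
    assume "lin_poly l dvd e"
    then obtain e' where "e = lin_poly l * e'"
      by (auto elim: dvdE)
    with e have "lin_poly l * defpoly ls = lin_poly l * (\<psi> * e')"
      by (simp add: algebra_simps)
    then have "defpoly ls = \<psi> * e'"
      by (rule S_mult_left_cancel[rotated]) (use Cons.prems(1) in simp)
    then have "\<psi> dvd defpoly ls" ..
    then have "\<psi> dvd 1 \<or> (\<exists>l\<in>set ls. lin_poly l dvd \<psi>)"
      using Cons.IH Cons.prems(1) by simp
    then show ?thesis
      by auto
  qed auto
qed simp

section \<open>The determinant \<open>det(p, x, r)\<close>\<close>

text \<open>If \<open>det(c, x, t) = 0\<close>, the cross products \<open>c \<times> x\<close> and \<open>c \<times> t\<close> are parallel; primality of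
  the first coordinate of \<open>c \<times> x\<close> makes \<open>c \<times> t = \<beta> (c \<times> x)\<close>, and then \<open>t - \<beta> x\<close> is parallel
  to \<open>c\<close>, whose third coordinate is a unit.\<close>

lemma cross_product_eq_0_imp_multiple:
  fixes c1 c2 c3 ci v1 v2 v3 :: "'a::comm_ring_1"
  assumes inv: "c3 * ci = 1" and "c2*v3 = c3*v2" "c3*v1 = c1*v3"
  shows "\<exists>\<alpha>. v1 = \<alpha> * c1 \<and> v2 = \<alpha> * c2 \<and> v3 = \<alpha> * c3"
proof (intro exI conjI)
  have "v = ci * (c3 * v)" for v
    using inv by (simp add: mult.assoc[symmetric] mult.commute[of ci])
  then show "v1 = (v3 * ci) * c1" "v2 = (v3 * ci) * c2" "v3 = (v3 * ci) * c3"
    using assms(2,3) by (metis mult.assoc mult.commute)+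
qed

lemma det_zero_imp_combination:
  fixes c1 c2 c3 x1 x2 x3 t1 t2 t3 ci :: S
  assumes det: "c1*(x2*t3 - x3*t2) + c2*(x3*t1 - x1*t3) + c3*(x1*t2 - x2*t1) = 0"
    and inv: "c3 * ci = 1"
    and prime: "\<And>a b. (c2*x3 - c3*x2) dvd a*b \<Longrightarrow> (c2*x3 - c3*x2) dvd a \<or> (c2*x3 - c3*x2) dvd b"
    and not_dvd: "\<not> (c2*x3 - c3*x2) dvd (c3*x1 - c1*x3)"
    and nonzero: "c2*x3 - c3*x2 \<noteq> 0"
  shows "\<exists>\<alpha> \<beta>. t1 = \<alpha>*c1 + \<beta>*x1 \<and> t2 = \<alpha>*c2 + \<beta>*x2 \<and> t3 = \<alpha>*c3 + \<beta>*x3"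
proof -
  define L1 L2 where "L1 = c2*x3 - c3*x2" and "L2 = c3*x1 - c1*x3"
  define T1 T2 where "T1 = c2*t3 - c3*t2" and "T2 = c3*t1 - c1*t3"
  have "L1*T2 - L2*T1 = c3 * (c1*(x2*t3 - x3*t2) + c2*(x3*t1 - x1*t3) + c3*(x1*t2 - x2*t1))"
    unfolding L1_def L2_def T1_def T2_def by (simp add: algebra_simps)
  then have L1T2: "L1*T2 = L2*T1"
    using det by simp
  then have "L1 dvd L2 * T1"
    by (simp add: dvd_def) (metis mult.commute)
  then have "L1 dvd T1"
    using prime not_dvd unfolding L1_def L2_def by blast
  then obtain \<beta> where \<beta>: "T1 = L1 * \<beta>" ..
  have "L1 * T2 = L1 * (L2 * \<beta>)"
    using L1T2 \<beta> by (simp add: algebra_simps)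
  then have \<beta>2: "T2 = L2 * \<beta>"
    using S_mult_left_cancel nonzero unfolding L1_def by blast
  have "c2*(t3 - \<beta>*x3) = c3*(t2 - \<beta>*x2)" "c3*(t1 - \<beta>*x1) = c1*(t3 - \<beta>*x3)"
    using \<beta> \<beta>2 unfolding T1_def T2_def L1_def L2_def by (simp_all add: algebra_simps)
  then obtain \<alpha> where "t1 - \<beta>*x1 = \<alpha>*c1" "t2 - \<beta>*x2 = \<alpha>*c2" "t3 - \<beta>*x3 = \<alpha>*c3"
    using cross_product_eq_0_imp_multiple[OF inv] by blast
  then show ?thesis
    by (intro exI[of _ \<alpha>] exI[of _ \<beta>]) (simp add: diff_eq_eq)
qed

lemma det_mult_coordinates:
  fixes P1 P2 P3 X1 X2 X3 T1 T2 T3 A1 A2 A3 :: "'a::comm_ring_1"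
  defines "D \<equiv> P1*(X2*T3 - X3*T2) + P2*(X3*T1 - X1*T3) + P3*(X1*T2 - X2*T1)"
    and "AP \<equiv> A1*P1 + A2*P2 + A3*P3" and "AX \<equiv> A1*X1 + A2*X2 + A3*X3"
    and "AT \<equiv> A1*T1 + A2*T2 + A3*T3"
  shows "D * A1 = AP*(X2*T3 - X3*T2) + AX*(T2*P3 - T3*P2) + AT*(P2*X3 - P3*X2)"
    and "D * A2 = AP*(X3*T1 - X1*T3) + AX*(T3*P1 - T1*P3) + AT*(P3*X1 - P1*X3)"
    and "D * A3 = AP*(X1*T2 - X2*T1) + AX*(T1*P2 - T2*P1) + AT*(P1*X2 - P2*X1)"
  unfolding D_def AP_def AX_def AT_def by (simp_all add: algebra_simps)

definition point_field :: "lform \<Rightarrow> S3" where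
  "point_field p = (case p of (p1, p2, p3) \<Rightarrow> (const p1, const p2, const p3))"

text \<open>\<open>det_pxr p r\<close> is the determinant of the rows \<open>p\<close>, \<open>(x, y, z)\<close> and \<open>r\<close>.\<close>

definition det_pxr :: "lform \<Rightarrow> S3 \<Rightarrow> S" where
  "det_pxr p r = (case p of (p1, p2, p3) \<Rightarrow> case r of (t1, t2, t3) \<Rightarrow>
     const p1 * (varY*t3 - varZ*t2) + const p2 * (varZ*t1 - varX*t3) + const p3 * (varX*t2 - varY*t1))"

lemma det_pxr_triple:
  "det_pxr (p1, p2, p3) (t1, t2, t3) =
     const p1 * (varY*t3 - varZ*t2) + const p2 * (varZ*t1 - varX*t3) + const p3 * (varX*t2 - varY*t1)"
  by (simp add: det_pxr_def)

lemma det_pxr_tadd: "det_pxr p (tadd r s) = det_pxr p r + det_pxr p s"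
  by (cases p; cases r; cases s) (simp add: det_pxr_def tadd_def algebra_simps)

lemma det_pxr_tsmul: "det_pxr p (tsmul w r) = w * det_pxr p r"
  by (cases p; cases r) (simp add: det_pxr_def tsmul_def algebra_simps)

lemma det_pxr_euler: "det_pxr p euler = 0"
  and det_pxr_point_field: "det_pxr p (point_field p) = 0"
  by (cases p; simp add: det_pxr_def euler_def point_field_def algebra_simps)+

lemma homog_det_pxr:
  assumes "homog3 k r"
  shows "homog (k + 1) (det_pxr p r)"
proof -
  obtain t1 t2 t3 where r: "r = (t1, t2, t3)" by (cases r)
  have "homog k t1" "homog k t2" "homog k t3"
    using assms r by (auto simp: homog3_def)
  moreover have hv: "homog (k + 1) (v * t)" if "homog 1 v" "homog k t" for v t
    using homog_mult[OF that] by simp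
  ultimately show ?thesis
    unfolding r by (cases p) (simp only: det_pxr_triple,
      intro homog_add homog_diff homog_const_mult hv homog_varX homog_varY homog_varZ)
qed

lemma deriv_along_point_field_lin_poly:
  "deriv_along (point_field p) (lin_poly l) = const (lin_eval l p)"
  by (cases p; cases l) (simp add: point_field_def deriv_along_lin_poly lin_eval_def const_mult
      const_add algebra_simps)

lemma homog_mult_deriv_along_point_field:
  "homog 1 v \<Longrightarrow> homog k q \<Longrightarrow> homog k (v * deriv_along (point_field p) q)"
  by (cases p) (simp add: point_field_def deriv_along_triple distrib_left mult.left_commute[of v]
      homog_add homog_const_mult homog_mult_dX homog_mult_dY homog_mult_dZ)

lemma lin_poly_dvd_det_pxr:
  assumes "l \<noteq> (0, 0, 0)" "lin_eval l p = 0"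
    and "lin_poly l dvd deriv_along r (lin_poly l)"
  shows "lin_poly l dvd det_pxr p r"
proof -
  obtain t1 t2 t3 where r: "r = (t1, t2, t3)" by (cases r)
  obtain a1 a2 a3 where l: "l = (a1, a2, a3)" by (cases l)
  obtain p1 p2 p3 where p: "p = (p1, p2, p3)" by (cases p)
  obtain t where t: "const a1 * t1 + const a2 * t2 + const a3 * t3 = lin_poly l * t"
    using assms(3) unfolding r l deriv_along_lin_poly by (auto elim!: dvdE simp: algebra_simps)
  have AP: "const a1 * const p1 + const a2 * const p2 + const a3 * const p3 = 0"
    using assms(2) by (simp add: l p lin_eval_def const_mult const_add)
  have AX: "const a1 * varX + const a2 * varY + const a3 * varZ = lin_poly l"
    by (simp add: l lin_poly_def)
  have dvd_if: "lin_poly l dvd D" if "D = AP' * U + AX' * V + AT' * W" "AP' = 0"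
    "AX' = lin_poly l" "AT' = lin_poly l * t" for D AP' AX' AT' U V W
    using that by (simp add: mult.assoc)
  note coords = det_mult_coordinates[where ?P1.0 = "const p1" and ?P2.0 = "const p2"
      and ?P3.0 = "const p3" and ?X1.0 = varX and ?X2.0 = varY and ?X3.0 = varZ
      and ?T1.0 = t1 and ?T2.0 = t2 and ?T3.0 = t3
      and ?A1.0 = "const a1" and ?A2.0 = "const a2" and ?A3.0 = "const a3",
      folded det_pxr_triple r p]
  have "lin_poly l dvd det_pxr p r * const a" if "a \<in> {a1, a2, a3}" for a
    using that dvd_if[OF coords(1) AP AX t] dvd_if[OF coords(2) AP AX t] dvd_if[OF coords(3) AP AX t]
    by blast
  moreover have "a1 \<noteq> 0 \<or> a2 \<noteq> 0 \<or> a3 \<noteq> 0"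
    using assms(1) l by auto
  ultimately show ?thesis
    using dvd_mult_const_imp_dvd by blast
qed

lemma det_zero_imp_combination_lin_poly:
  fixes c1 c2 c3 :: complex and x1 x2 x3 t1 t2 t3 :: S
  assumes det: "const c1*(x2*t3 - x3*t2) + const c2*(x3*t1 - x1*t3) + const c3*(x1*t2 - x2*t1) = 0"
    and "c3 \<noteq> 0"
    and l1: "const c2 * x3 - const c3 * x2 = lin_poly l1"
    and l2: "const c3 * x1 - const c1 * x3 = lin_poly l2"
    and "l1 \<noteq> (0, 0, 0)" "l2 \<noteq> (0, 0, 0)" "\<not> proportional l1 l2"
  shows "\<exists>\<alpha> \<beta>. t1 = \<alpha>*const c1 + \<beta>*x1 \<and> t2 = \<alpha>*const c2 + \<beta>*x2 \<and> t3 = \<alpha>*const c3 + \<beta>*x3"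
proof (rule det_zero_imp_combination[OF det const_mult_inverse[OF \<open>c3 \<noteq> 0\<close>]], unfold l1 l2)
  show "\<And>a b. lin_poly l1 dvd a * b \<Longrightarrow> lin_poly l1 dvd a \<or> lin_poly l1 dvd b"
    using lin_poly_prime assms(5) by blast
  show "\<not> lin_poly l1 dvd lin_poly l2"
    using lin_poly_dvd_imp_proportional assms(6,7) by blast
qed (use assms(5) in simp)

lemma det_pxr_eq_0_imp_combination:
  assumes "det_pxr p r = 0" "p \<noteq> (0, 0, 0)"
  shows "\<exists>\<alpha> \<beta>. r = tadd (tsmul \<alpha> (point_field p)) (tsmul \<beta> euler)"
proof -
  obtain p1 p2 p3 where p: "p = (p1, p2, p3)" by (cases p)
  obtain t1 t2 t3 where r: "r = (t1, t2, t3)" by (cases r)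
  have lin: "const a * varZ - const b * varY = lin_poly (0, - b, a)"
    "const a * varX - const b * varZ = lin_poly (a, 0, - b)"
    "const a * varY - const b * varX = lin_poly (- b, a, 0)" for a b
    by (simp_all add: lin_poly_def const_uminus)
  have det: "const p1*(varY*t3 - varZ*t2) + const p2*(varZ*t1 - varX*t3) + const p3*(varX*t2 - varY*t1) = 0"
    "const p2*(varZ*t1 - varX*t3) + const p3*(varX*t2 - varY*t1) + const p1*(varY*t3 - varZ*t2) = 0"
    "const p3*(varX*t2 - varY*t1) + const p1*(varY*t3 - varZ*t2) + const p2*(varZ*t1 - varX*t3) = 0"
    using assms(1) by (simp_all add: p r det_pxr_triple algebra_simps)
  consider "p3 \<noteq> 0" | "p1 \<noteq> 0" | "p2 \<noteq> 0"
    using assms(2) p by auto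
  then have "\<exists>\<alpha> \<beta>. t1 = \<alpha>*const p1 + \<beta>*varX \<and> t2 = \<alpha>*const p2 + \<beta>*varY \<and> t3 = \<alpha>*const p3 + \<beta>*varZ"
  proof cases
    case 1
    show ?thesis
      by (rule det_zero_imp_combination_lin_poly[OF det(1) 1 lin(1) lin(2)])
         (use 1 in \<open>auto simp: proportional_def\<close>)
  next
    case 2
    have "\<exists>\<alpha> \<beta>. t2 = \<alpha>*const p2 + \<beta>*varY \<and> t3 = \<alpha>*const p3 + \<beta>*varZ \<and> t1 = \<alpha>*const p1 + \<beta>*varX"
      by (rule det_zero_imp_combination_lin_poly[OF det(2) 2 lin(2) lin(3)])
         (use 2 in \<open>auto simp: proportional_def\<close>)
    then show ?thesis by blast
  next
    case 3
    have "\<exists>\<alpha> \<beta>. t3 = \<alpha>*const p3 + \<beta>*varZ \<and> t1 = \<alpha>*const p1 + \<beta>*varX \<and> t2 = \<alpha>*const p2 + \<beta>*varY"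
      by (rule det_zero_imp_combination_lin_poly[OF det(3) 3 lin(3) lin(1)])
         (use 3 in \<open>auto simp: proportional_def\<close>)
    then show ?thesis by blast
  qed
  then show ?thesis
    by (simp add: p r point_field_def euler_def tadd_def tsmul_def algebra_simps)
qed

lemma homog3_zero [simp]: "homog3 k (0, 0, 0)"
  by (simp add: homog3_def)

lemma tsmul_homog3_eq_0:
  assumes "homog3 e s" "homog3 k (tsmul w s)" "k < e"
  shows "tsmul w s = (0, 0, 0)"
proof -
  have "w * x = 0" if "homog e x" "homog k (w * x)" for x
    using hcomp_homog[OF that(2)] hcomp_mult_homog[OF that(1), of k w] assms(3) by simp
  then show ?thesis
    using assms(1,2) by (cases s) (simp add: homog3_def tsmul_def)
qed

abbreviation lincomb3 :: "S \<Rightarrow> S \<Rightarrow> S \<Rightarrow> S3 \<Rightarrow> S3 \<Rightarrow> S3 \<Rightarrow> S3" where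
  "lincomb3 A B C r1 r2 r3 \<equiv> tadd (tsmul A r1) (tadd (tsmul B r2) (tsmul C r3))"

lemma homog3_lincomb3_hcomp:
  assumes "homog3 e1 r1" "homog3 e2 r2" "homog3 e3 r3" "homog3 k (lincomb3 A B C r1 r2 r3)"
  shows "lincomb3 A B C r1 r2 r3 =
    lincomb3 (if e1 \<le> k then hcomp (k - e1) A else 0) (if e2 \<le> k then hcomp (k - e2) B else 0)
      (if e3 \<le> k then hcomp (k - e3) C else 0) r1 r2 r3"
proof -
  have component: "A * x + (B * y + C * z) = (if e1 \<le> k then hcomp (k - e1) A else 0) * x +
      ((if e2 \<le> k then hcomp (k - e2) B else 0) * y + (if e3 \<le> k then hcomp (k - e3) C else 0) * z)"
    if "homog e1 x" "homog e2 y" "homog e3 z" "homog k (A * x + (B * y + C * z))" for x y z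
    using hcomp_homog[OF that(4)]
    by (cases "e1 \<le> k"; cases "e2 \<le> k"; cases "e3 \<le> k")
       (simp_all add: hcomp_add hcomp_mult_homog[OF that(1)] hcomp_mult_homog[OF that(2)]
         hcomp_mult_homog[OF that(3)])
  obtain a1 a2 a3 b1 b2 b3 c1 c2 c3 where "r1 = (a1, a2, a3)" "r2 = (b1, b2, b3)" "r3 = (c1, c2, c3)"
    by (cases r1; cases r2; cases r3)
  with assms show ?thesis
    by (simp add: homog3_def tadd_def tsmul_def component)
qed

lemma exists_lin_eval_eq_1:
  assumes "p \<noteq> (0, 0, 0)"
  shows "\<exists>q. lin_eval q p = 1"
proof -
  obtain p1 p2 p3 where p: "p = (p1, p2, p3)" by (cases p)
  consider "p1 \<noteq> 0" | "p2 \<noteq> 0" | "p3 \<noteq> 0"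
    using assms p by auto
  then show ?thesis
  proof cases
    case 1
    then show ?thesis by (intro exI[of _ "(1 / p1, 0, 0)"]) (simp add: p lin_eval_def)
  next
    case 2
    then show ?thesis by (intro exI[of _ "(0, 1 / p2, 0)"]) (simp add: p lin_eval_def)
  next
    case 3
    then show ?thesis by (intro exI[of _ "(0, 0, 1 / p3)"]) (simp add: p lin_eval_def)
  qed
qed

definition cross_grad :: "lform \<Rightarrow> S \<Rightarrow> S3" where
  "cross_grad q g = (case q of (q1, q2, q3) \<Rightarrow>
     (const q2 * dZ g - const q3 * dY g, const q3 * dX g - const q1 * dZ g,
      const q1 * dY g - const q2 * dX g))"

lemma deriv_along_cross_grad_self: "deriv_along (cross_grad q g) g = 0"
  by (cases q) (simp add: cross_grad_def deriv_along_triple algebra_simps)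

lemma det_pxr_cross_grad:
  "det_pxr p (cross_grad q g) =
     const (lin_eval q p) * deriv_along euler g - deriv_along (point_field p) g * lin_poly q"
  by (cases p; cases q) (simp add: cross_grad_def det_pxr_triple deriv_along_triple euler_def
      point_field_def lin_eval_def lin_poly_def algebra_simps flip: const_mult const_add)

section \<open>Syzygies of an arrangement at a point\<close>

locale arrangement_point =
  fixes L :: "lform list" and p :: lform
  assumes arrangement: "arrangement L"
    and point_nonzero: "p \<noteq> (0, 0, 0)"
    and mult_ge_2: "mult_pt L p \<ge> 2"
begin

definition "G = filter (\<lambda>l. lin_eval l p = 0) L"
definition "H = filter (\<lambda>l. lin_eval l p \<noteq> 0) L"
definition "g = defpoly G"
definition "h = defpoly H"
definition "d = length L"
definition "m = length G"
definition "dp_h = deriv_along (point_field p) h"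
abbreviation "f \<equiv> defpoly L"

lemma mult_pt_eq: "mult_pt L p = m"
  unfolding mult_pt_def m_def G_def by (simp add: length_filter_conv_card)

lemma length_G_H: "m + length H = d"
  unfolding m_def d_def G_def H_def by (rule sum_length_filter_compl)

lemma m_ge_2: "m \<ge> 2"
  using mult_ge_2 mult_pt_eq by simp

lemma m_le_d: "m \<le> d"
  using length_G_H by simp

lemma f_eq: "f = g * h"
  unfolding g_def h_def G_def H_def by (rule defpoly_filter)

lemma nonzero_L: "\<forall>l\<in>set L. l \<noteq> (0, 0, 0)"
  and nonzero_G: "\<forall>l\<in>set G. l \<noteq> (0, 0, 0)"
  and nonzero_H: "\<forall>l\<in>set H. l \<noteq> (0, 0, 0)"
  using arrangement by (auto simp: arrangement_def G_def H_def)

lemma nonproportional_L: "sorted_wrt (\<lambda>l l'. \<not> proportional l l') L"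
  using arrangement by (auto simp: arrangement_def sorted_wrt_iff_nth_less)

lemma nonproportional_G: "sorted_wrt (\<lambda>l l'. \<not> proportional l l') G"
  and nonproportional_H: "sorted_wrt (\<lambda>l l'. \<not> proportional l l') H"
  using nonproportional_L by (simp_all add: G_def H_def sorted_wrt_filter)

lemma g_nonzero: "g \<noteq> 0"
  and h_nonzero: "h \<noteq> 0"
  using defpoly_nonzero nonzero_G nonzero_H by (auto simp: g_def h_def)

lemma homog_g: "homog m g"
  unfolding g_def m_def by (rule homog_defpoly)

lemma homog_h: "homog (d - m) h"
proof -
  have "length H = d - m"
    using length_G_H by simp
  then show ?thesis
    using homog_defpoly[of H] by (simp add: h_def)
qed

lemma deriv_along_point_field_g: "deriv_along (point_field p) g = 0"
  unfolding g_def by (rule deriv_along_defpoly_eq_0) (simp add: deriv_along_point_field_lin_poly G_def)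

lemma deriv_along_point_field_f: "deriv_along (point_field p) f = g * dp_h"
  by (simp add: f_eq deriv_along_mult deriv_along_point_field_g dp_h_def)

lemma deriv_along_euler_f: "deriv_along euler f = of_nat d * f"
  by (simp add: deriv_along_euler_defpoly d_def)

lemma deriv_along_euler_g: "deriv_along euler g = of_nat m * g"
  by (simp add: g_def m_def deriv_along_euler_defpoly)

lemma homog_mult_dp_h: "homog 1 v \<Longrightarrow> homog (d - m) (v * dp_h)"
  unfolding dp_h_def by (rule homog_mult_deriv_along_point_field[OF _ homog_h])

definition "theta0 = tadd (tsmul (of_nat d * h) (point_field p)) (tsmul (- dp_h) euler)"

lemma theta0_triple:
  assumes "p = (p1, p2, p3)"
  shows "theta0 = (of_nat d * h * const p1 - dp_h * varX,
     of_nat d * h * const p2 - dp_h * varY, of_nat d * h * const p3 - dp_h * varZ)"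
  unfolding theta0_def by (simp add: assms tadd_def tsmul_def point_field_def euler_def)

lemma deriv_along_theta0: "deriv_along theta0 f = 0"
  unfolding theta0_def deriv_along_tadd deriv_along_tsmul deriv_along_point_field_f
    deriv_along_euler_f
  by (simp add: f_eq algebra_simps)

lemma homog3_theta0: "homog3 (d - m) theta0"
proof -
  obtain p1 p2 p3 where p: "p = (p1, p2, p3)" by (cases p)
  have "homog (d - m) (of_nat d * h * const c)" for c
    using homog_mult[OF homog_mult[OF homog_const homog_h] homog_const] by (simp add: of_nat_eq_const)
  then show ?thesis
    using homog_mult_dp_h[OF homog_varX] homog_mult_dp_h[OF homog_varY] homog_mult_dp_h[OF homog_varZ]
    by (simp add: homog3_def theta0_triple[OF p] homog_diff mult.commute[of dp_h])
qed

lemma theta0_nonzero: "theta0 \<noteq> (0, 0, 0)"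
proof
  assume theta0: "theta0 = (0, 0, 0)"
  obtain p1 p2 p3 where p: "p = (p1, p2, p3)" by (cases p)
  define D where "D = of_nat d * h"
  have "D \<noteq> 0"
    using h_nonzero m_ge_2 m_le_d unfolding D_def by (simp add: of_nat_eq_const)
  have e: "D * const p1 = dp_h * varX" "D * const p2 = dp_h * varY" "D * const p3 = dp_h * varZ"
    using theta0 unfolding theta0_triple[OF p] D_def by auto
  have "D * lin_poly (- p2, p1, 0) = (D * const p1) * varY - (D * const p2) * varX"
    and "D * lin_poly (- p3, 0, p1) = (D * const p1) * varZ - (D * const p3) * varX"
    by (simp_all add: lin_poly_def const_uminus algebra_simps)
  then have "D * lin_poly (- p2, p1, 0) = 0" "D * lin_poly (- p3, 0, p1) = 0"
    unfolding e by (simp_all add: algebra_simps)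
  with \<open>D \<noteq> 0\<close> have "(- p2, p1, 0) = (0, 0, 0)" "(- p3, 0, p1) = (0, 0, 0)"
    by simp_all
  then show False
    using point_nonzero p by simp
qed

lemma det_pxr_theta0: "det_pxr p theta0 = 0"
  unfolding theta0_def det_pxr_tadd det_pxr_tsmul det_pxr_point_field det_pxr_euler by simp

text \<open>A line through \<open>p\<close> divides \<open>det(p, x, r)\<close> for every syzygy \<open>r\<close>, since it divides
  \<open>r\<close> applied to itself.\<close>

lemma lin_poly_dvd_deriv_along_self:
  assumes "deriv_along r f = 0" "l \<in> set L"
  shows "lin_poly l dvd deriv_along r (lin_poly l)"
proof -
  define f' where "f' = defpoly (remove1 l L)"
  have l_nonzero: "l \<noteq> (0, 0, 0)"
    using nonzero_L assms(2) by auto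
  have "deriv_along r (lin_poly l) * f' = lin_poly l * (- deriv_along r f')"
    using assms defpoly_remove1[OF assms(2)]
    by (simp add: f'_def deriv_along_mult eq_neg_iff_add_eq_0)
  then have "lin_poly l dvd deriv_along r (lin_poly l) * f'"
    by (metis dvd_triv_left)
  moreover have "\<not> lin_poly l dvd f'"
  proof
    assume "lin_poly l dvd f'"
    moreover have "\<forall>l'\<in>set (remove1 l L). l' \<noteq> (0, 0, 0)"
      using nonzero_L by (auto dest: subsetD[OF set_remove1_subset])
    ultimately obtain l' where "l' \<in> set (remove1 l L)" "proportional l l'"
      using lin_poly_dvd_defpoly_imp_proportional[OF l_nonzero] unfolding f'_def by blast
    then show False
      using sorted_wrt_nonproportional_remove1[OF nonproportional_L assms(2)] by blast
  qed
  ultimately show ?thesis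
    using lin_poly_prime[OF l_nonzero] by blast
qed

lemma g_dvd_det_pxr: "deriv_along r f = 0 \<Longrightarrow> g dvd det_pxr p r"
  unfolding g_def
  by (intro defpoly_dvd nonproportional_G nonzero_G ballI lin_poly_dvd_det_pxr
      lin_poly_dvd_deriv_along_self) (use nonzero_L in \<open>auto simp: G_def\<close>)

lemma lin_poly_H_not_dvd_dp_h:
  assumes "l \<in> set H"
  shows "\<not> lin_poly l dvd dp_h"
proof
  assume dvd: "lin_poly l dvd dp_h"
  define h' where "h' = defpoly (remove1 l H)"
  have h: "h = lin_poly l * h'"
    unfolding h'_def h_def using defpoly_remove1[OF assms] .
  have "l \<noteq> (0, 0, 0)" and eval: "lin_eval l p \<noteq> 0"
    using nonzero_H assms by (auto simp: H_def)
  have "dp_h = const (lin_eval l p) * h' + lin_poly l * deriv_along (point_field p) h'"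
    unfolding dp_h_def h deriv_along_mult deriv_along_point_field_lin_poly ..
  then have "h' * const (lin_eval l p) = dp_h - lin_poly l * deriv_along (point_field p) h'"
    by (simp add: algebra_simps)
  also have "lin_poly l dvd \<dots>"
    by (rule dvd_diff[OF dvd dvd_triv_left])
  finally have "lin_poly l dvd h'"
    by (rule dvd_mult_const_imp_dvd[OF _ eval])
  moreover have "\<forall>l'\<in>set (remove1 l H). l' \<noteq> (0, 0, 0)"
    using nonzero_H by (auto dest: subsetD[OF set_remove1_subset])
  ultimately obtain l' where "l' \<in> set (remove1 l H)" "proportional l l'"
    using lin_poly_dvd_defpoly_imp_proportional[OF \<open>l \<noteq> (0, 0, 0)\<close>] unfolding h'_def by blast
  then show False
    using sorted_wrt_nonproportional_remove1[OF nonproportional_H assms] by blast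
qed

lemma h_dvd_of_dvd_mult_dp_h:
  assumes "h dvd a * dp_h"
  shows "h dvd a"
  unfolding h_def
proof (intro defpoly_dvd nonproportional_H nonzero_H ballI)
  fix l assume l: "l \<in> set H"
  have "lin_poly l dvd h"
    unfolding h_def defpoly_remove1[OF l] by simp
  then have "lin_poly l dvd a * dp_h"
    using assms by (rule dvd_trans)
  moreover have "l \<noteq> (0, 0, 0)"
    using nonzero_H l by simp
  ultimately show "lin_poly l dvd a"
    using lin_poly_prime lin_poly_H_not_dvd_dp_h[OF l] by blast
qed

lemma common_divisor_h_dp_h_unit:
  assumes "\<psi> dvd h" "\<psi> dvd dp_h"
  shows "\<psi> dvd 1"
proof -
  have "\<not> lin_poly l dvd \<psi>" if "l \<in> set H" for l
    using lin_poly_H_not_dvd_dp_h[OF that] dvd_trans[OF _ assms(2)] by blast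
  then show ?thesis
    using dvd_defpoly_cases[OF nonzero_H, of \<psi>] assms(1) unfolding h_def by blast
qed

lemma d_mult_inverse: "of_nat d * const (1 / of_nat d) = (1::S)"
  using const_mult_inverse[of "of_nat d"] m_ge_2 m_le_d by (simp add: of_nat_eq_const)

lemma combination_eq_tsmul_theta0:
  assumes "\<alpha> = h * w" "w * dp_h = - (\<beta> * of_nat d)"
  shows "tadd (tsmul \<alpha> (point_field p)) (tsmul \<beta> euler) = tsmul (const (1 / of_nat d) * w) theta0"
proof -
  have "\<beta> = \<beta> * (of_nat d * const (1 / of_nat d))"
    by (simp add: d_mult_inverse)
  also have "\<dots> = - (w * dp_h) * const (1 / of_nat d)"
    unfolding assms(2) by (simp add: mult.assoc)
  also have "\<dots> = const (1 / of_nat d) * w * - dp_h"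
    by (simp add: algebra_simps)
  finally have "\<beta> = const (1 / of_nat d) * w * - dp_h" .
  moreover have "const (1 / of_nat d) * w * (of_nat d * h) = (of_nat d * const (1 / of_nat d)) * (h * w)"
    by (simp add: algebra_simps)
  then have "\<alpha> = const (1 / of_nat d) * w * (of_nat d * h)"
    unfolding assms(1) d_mult_inverse by simp
  ultimately show ?thesis
    unfolding theta0_def tsmul_tadd_tsmul by simp
qed

text \<open>A syzygy \<open>r\<close> with \<open>det(p, x, r) = 0\<close> is \<open>\<alpha> \<partial>\<^sub>p + \<beta> E\<close>, and applying it to \<open>f = g h\<close> gives
  \<open>\<alpha> \<partial>\<^sub>p h + d \<beta> h = 0\<close>; coprimality of \<open>h\<close> and \<open>\<partial>\<^sub>p h\<close> forces \<open>h\<close> to divide \<open>\<alpha>\<close>.\<close>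

lemma syzygy_det_zero_imp_multiple_theta0:
  assumes "deriv_along r f = 0" "det_pxr p r = 0"
  shows "\<exists>w. r = tsmul w theta0"
proof -
  obtain \<alpha> \<beta> where r: "r = tadd (tsmul \<alpha> (point_field p)) (tsmul \<beta> euler)"
    using det_pxr_eq_0_imp_combination[OF assms(2) point_nonzero] by blast
  have "g * (\<alpha> * dp_h + \<beta> * of_nat d * h) = 0"
    using assms(1) unfolding r deriv_along_tadd deriv_along_tsmul deriv_along_point_field_f
      deriv_along_euler_f by (simp add: f_eq algebra_simps)
  then have "\<alpha> * dp_h + \<beta> * of_nat d * h = 0"
    using g_nonzero by simp
  then have e: "\<alpha> * dp_h = h * (- (\<beta> * of_nat d))"
    by (simp add: algebra_simps eq_neg_iff_add_eq_0)
  then have "h dvd \<alpha> * dp_h"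
    by simp
  then have "h dvd \<alpha>"
    by (rule h_dvd_of_dvd_mult_dp_h)
  then obtain w where w: "\<alpha> = h * w" ..
  have "h * (w * dp_h) = h * (- (\<beta> * of_nat d))"
    using e unfolding w by (simp add: mult.assoc)
  then have "w * dp_h = - (\<beta> * of_nat d)"
    by (rule S_mult_left_cancel[OF h_nonzero])
  then show ?thesis
    using combination_eq_tsmul_theta0[OF w] r by blast
qed

lemma det_pxr_syzygy:
  assumes "deriv_along r f = 0" "homog3 k r"
  obtains \<psi> where "homog (k + 1 - m) \<psi>" "det_pxr p r = (if m \<le> k + 1 then \<psi> * g else 0)"
proof -
  obtain \<psi> where \<psi>: "det_pxr p r = g * \<psi>"
    using g_dvd_det_pxr[OF assms(1)] ..
  have "det_pxr p r = hcomp (k + 1) (det_pxr p r)"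
    using hcomp_homog[OF homog_det_pxr[OF assms(2)]] by simp
  also have "\<dots> = (if m \<le> k + 1 then hcomp (k + 1 - m) \<psi> * g else 0)"
    unfolding \<psi> mult.commute[of g] by (rule hcomp_mult_homog[OF homog_g])
  finally show ?thesis
    using that homog_hcomp by blast
qed

lemma syzygy_det_zero_low_degree_eq_0:
  assumes "deriv_along r f = 0" "det_pxr p r = 0" "homog3 k r" "k < d - m"
  shows "r = (0, 0, 0)"
proof -
  obtain w where "r = tsmul w theta0"
    using syzygy_det_zero_imp_multiple_theta0[OF assms(1,2)] ..
  then show ?thesis
    using tsmul_homog3_eq_0[OF homog3_theta0, of k w] assms(3,4) by simp
qed

lemma small_syzygy_eq_0:
  assumes "deriv_along r f = 0" "homog3 k r" "k + 1 < m" "k < d - m"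
  shows "r = (0, 0, 0)"
proof (rule syzygy_det_zero_low_degree_eq_0[OF assms(1) _ assms(2,4)])
  obtain \<psi> where "det_pxr p r = (if m \<le> k + 1 then \<psi> * g else 0)"
    using det_pxr_syzygy[OF assms(1,2)] .
  then show "det_pxr p r = 0"
    using assms(3) by simp
qed

lemma theta0_in_span:
  assumes "homog3 e r1" "homog3 e' r2" "homog3 e' r3" "e \<le> e'"
    and "theta0 = lincomb3 A B C r1 r2 r3"
  shows "e \<le> d - m" and "d - m < e' \<Longrightarrow> det_pxr p r1 = 0"
proof -
  have theta0: "theta0 = lincomb3 (if e \<le> d - m then hcomp (d - m - e) A else 0)
      (if e' \<le> d - m then hcomp (d - m - e') B else 0)
      (if e' \<le> d - m then hcomp (d - m - e') C else 0) r1 r2 r3"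
    using homog3_lincomb3_hcomp[OF assms(1-3)] homog3_theta0 assms(5) by simp
  then show "e \<le> d - m"
    using theta0_nonzero assms(4) by (cases "e \<le> d - m") auto
  assume "d - m < e'"
  then obtain c where "theta0 = tsmul c r1"
    using theta0 by auto
  moreover have "c \<noteq> 0"
    using theta0_nonzero \<open>theta0 = tsmul c r1\<close> by auto
  ultimately show "det_pxr p r1 = 0"
    using det_pxr_theta0 det_pxr_tsmul[of p c r1] by simp
qed

text \<open>Two more syzygies, built from the field \<open>\<eta> = q \<times> \<nabla>g\<close> with \<open>q \<cdot> p = 1\<close>, which kills \<open>g\<close>
  and has \<open>det(p, x, \<eta>) = m g\<close>.\<close>

lemma syzygies_det_g_h_dp_h:
  obtains \<theta>a \<theta>b where "deriv_along \<theta>a f = 0" "det_pxr p \<theta>a = of_nat m * g * h"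
    and "deriv_along \<theta>b f = 0" "det_pxr p \<theta>b = of_nat m * g * dp_h"
proof -
  obtain q where q: "lin_eval q p = 1"
    using exists_lin_eval_eq_1[OF point_nonzero] ..
  define \<eta> where "\<eta> = cross_grad q g"
  have deriv_\<eta>_f: "deriv_along \<eta> f = g * deriv_along \<eta> h"
    by (simp add: \<eta>_def f_eq deriv_along_mult deriv_along_cross_grad_self)
  have det_\<eta>: "det_pxr p \<eta> = of_nat m * g"
    by (simp add: \<eta>_def det_pxr_cross_grad q deriv_along_euler_g deriv_along_point_field_g)
  define \<theta>a where "\<theta>a = tadd (tsmul h \<eta>) (tsmul (- (const (1 / of_nat d) * deriv_along \<eta> h)) euler)"
  define \<theta>b where "\<theta>b = tadd (tsmul dp_h \<eta>) (tsmul (- deriv_along \<eta> h) (point_field p))"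
  have "deriv_along \<theta>a f =
      h * (g * deriv_along \<eta> h) - const (1 / of_nat d) * deriv_along \<eta> h * (of_nat d * (g * h))"
    unfolding \<theta>a_def deriv_along_tadd deriv_along_tsmul deriv_\<eta>_f deriv_along_euler_f
    by (simp add: f_eq)
  also have "\<dots> = h * (g * deriv_along \<eta> h) - (of_nat d * const (1 / of_nat d)) * (h * (g * deriv_along \<eta> h))"
    by (simp add: algebra_simps)
  finally have a1: "deriv_along \<theta>a f = 0"
    by (simp add: d_mult_inverse)
  have b1: "deriv_along \<theta>b f = 0"
    unfolding \<theta>b_def deriv_along_tadd deriv_along_tsmul deriv_\<eta>_f deriv_along_point_field_f
    by (simp add: algebra_simps)
  have a2: "det_pxr p \<theta>a = of_nat m * g * h"
    and b2: "det_pxr p \<theta>b = of_nat m * g * dp_h"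
    unfolding \<theta>a_def \<theta>b_def det_pxr_tadd det_pxr_tsmul det_\<eta> det_pxr_euler det_pxr_point_field
    by (simp_all add: algebra_simps)
  show ?thesis
    by (rule that[OF a1 a2 b1 b2])
qed

lemma common_divisor_m_h_m_dp_h_unit:
  assumes "\<psi> dvd of_nat m * h" "\<psi> dvd of_nat m * dp_h"
  shows "\<psi> dvd 1"
proof (rule common_divisor_h_dp_h_unit)
  have m: "of_nat m \<noteq> (0::complex)"
    using m_ge_2 by simp
  have "\<psi> dvd h * const (of_nat m)" "\<psi> dvd dp_h * const (of_nat m)"
    using assms by (simp_all only: of_nat_eq_const mult.commute)
  then show "\<psi> dvd h" "\<psi> dvd dp_h"
    using dvd_mult_const_imp_dvd[OF _ m] by blast+
qed

end

section \<open>Free and nearly free arrangements\<close>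

locale free_arrangement_point = arrangement_point +
  fixes d1 d2 :: nat and r1 r2 :: S3
  assumes homog_r1: "homog3 d1 r1" and homog_r2: "homog3 d2 r2"
    and syzygy_r1: "r1 \<in> AR (defpoly L)" and syzygy_r2: "r2 \<in> AR (defpoly L)"
    and basis: "\<forall>r\<in>AR (defpoly L). \<exists>!pq. r = tadd (tsmul (fst pq) r1) (tsmul (snd pq) r2)"
    and d1_le_d2: "d1 \<le> d2"
begin

lemma syzygy_combination:
  assumes "deriv_along r f = 0"
  shows "\<exists>A B. r = tadd (tsmul A r1) (tsmul B r2)"
proof -
  have "r \<in> AR f"
    using assms by (simp add: mem_AR_iff)
  then obtain pq where "r = tadd (tsmul (fst pq) r1) (tsmul (snd pq) r2)"
    using basis by blast
  then show ?thesis
    by blast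
qed

lemma combination_eq_0_imp:
  assumes "tadd (tsmul A r1) (tsmul B r2) = (0, 0, 0)"
  shows "A = 0 \<and> B = 0"
proof -
  have "(0, 0, 0) \<in> AR f"
    by (simp add: mem_AR_iff)
  then have "\<exists>!pq. (0, 0, 0) = tadd (tsmul (fst pq) r1) (tsmul (snd pq) r2)"
    using basis by blast
  moreover have "(0, 0, 0) = tadd (tsmul (fst (0::S, 0::S)) r1) (tsmul (snd (0::S, 0::S)) r2)"
    by simp
  moreover have "(0, 0, 0) = tadd (tsmul (fst (A, B)) r1) (tsmul (snd (A, B)) r2)"
    using assms by simp
  ultimately have "(A, B) = (0, 0)"
    by blast
  then show ?thesis
    by simp
qed

lemma r1_nonzero: "r1 \<noteq> (0, 0, 0)"
  using combination_eq_0_imp[of 1 0] by auto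

lemma d1_eq:
  assumes "d < 2 * m"
  shows "d1 = d - m"
proof -
  obtain A B where "theta0 = tadd (tsmul A r1) (tsmul B r2)"
    using syzygy_combination[OF deriv_along_theta0] by blast
  then have "theta0 = lincomb3 A B 0 r1 r2 (0, 0, 0)"
    by simp
  then have "d1 \<le> d - m"
    by (rule theta0_in_span(1)[OF homog_r1 homog_r2 homog3_zero d1_le_d2])
  moreover have "\<not> d1 < d - m"
  proof
    assume "d1 < d - m"
    then have "d1 + 1 < m"
      using assms by linarith
    then show False
      using small_syzygy_eq_0[OF _ homog_r1] \<open>d1 < d - m\<close> syzygy_r1 r1_nonzero
      by (simp add: mem_AR_iff)
  qed
  ultimately show ?thesis
    by simp
qed

text \<open>Otherwise both generators would be multiples of \<open>\<theta>\<^sub>0\<close>, hence dependent.\<close>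

lemma m_le_Suc_d2: "m \<le> d2 + 1"
proof (rule ccontr)
  assume "\<not> m \<le> d2 + 1"
  then have "d1 + 1 < m" "d2 + 1 < m"
    using d1_le_d2 by auto
  then have "det_pxr p r1 = 0" "det_pxr p r2 = 0"
    using det_pxr_syzygy[of r1 d1] det_pxr_syzygy[of r2 d2] syzygy_r1 syzygy_r2 homog_r1 homog_r2
    by (auto simp: mem_AR_iff)
  moreover have "deriv_along r1 f = 0" "deriv_along r2 f = 0"
    using syzygy_r1 syzygy_r2 by (simp_all add: mem_AR_iff)
  ultimately obtain w1 w2 where w1: "r1 = tsmul w1 theta0" and w2: "r2 = tsmul w2 theta0"
    using syzygy_det_zero_imp_multiple_theta0 by metis
  then have "tadd (tsmul w2 r1) (tsmul (- w1) r2) = (0, 0, 0)"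
    by (cases theta0) (simp add: tadd_def tsmul_def algebra_simps)
  then have "w1 = 0"
    using combination_eq_0_imp[of w2 "- w1"] by simp
  then show False
    using r1_nonzero w1 by simp
qed

text \<open>If \<open>d\<^sub>2 > d\<^sub>1\<close>, then \<open>\<theta>\<^sub>0\<close> is a multiple of \<open>r\<^sub>1\<close>, so \<open>det(p, x, r\<^sub>1) = 0\<close> and the determinants
  of all syzygies are multiples of \<open>det(p, x, r\<^sub>2)\<close>.\<close>

lemma Suc_d2_le_m:
  assumes "d < 2 * m"
  shows "d2 + 1 \<le> m"
proof (cases "d1 = d2")
  case True
  then show ?thesis
    using d1_eq[OF assms] assms by simp
next
  case False
  then have "d - m < d2"
    using d1_eq[OF assms] d1_le_d2 by simp
  obtain A B where "theta0 = tadd (tsmul A r1) (tsmul B r2)"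
    using syzygy_combination[OF deriv_along_theta0] by blast
  then have det_r1: "det_pxr p r1 = 0"
    using theta0_in_span(2)[OF homog_r1 homog_r2 homog3_zero d1_le_d2, of A B 0] \<open>d - m < d2\<close>
    by simp
  obtain \<psi> where \<psi>: "homog (d2 + 1 - m) \<psi>" "det_pxr p r2 = \<psi> * g"
    using det_pxr_syzygy[of r2 d2] syzygy_r2 homog_r2 m_le_Suc_d2 by (auto simp: mem_AR_iff)
  have \<psi>_dvd: "\<psi> dvd of_nat m * t"
    if syz: "deriv_along \<theta> f = 0" and det: "det_pxr p \<theta> = of_nat m * g * t" for \<theta> t
  proof -
    obtain A B where "\<theta> = tadd (tsmul A r1) (tsmul B r2)"
      using syzygy_combination[OF syz] by blast
    then have "g * (of_nat m * t) = g * (B * \<psi>)"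
      using det by (simp add: det_pxr_tadd det_pxr_tsmul det_r1 \<psi>(2) algebra_simps)
    then have "of_nat m * t = B * \<psi>"
      by (rule S_mult_left_cancel[OF g_nonzero])
    then show ?thesis
      by simp
  qed
  obtain \<theta>a \<theta>b where "deriv_along \<theta>a f = 0" "det_pxr p \<theta>a = of_nat m * g * h"
    and "deriv_along \<theta>b f = 0" "det_pxr p \<theta>b = of_nat m * g * dp_h"
    by (rule syzygies_det_g_h_dp_h)
  then have "\<psi> dvd 1"
    by (intro common_divisor_m_h_m_dp_h_unit \<psi>_dvd)
  then obtain v where "1 = \<psi> * v" ..
  then show ?thesis
    using homog_unit_imp_deg_0[OF \<psi>(1)] by simp
qed

lemma mult_eq_Suc_d2: "d < 2 * m \<Longrightarrow> m = d2 + 1"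
  using m_le_Suc_d2 Suc_d2_le_m by (simp add: le_antisym)

end

locale nearly_free_arrangement_point = arrangement_point +
  fixes d1 d2 :: nat and r1 r2 r3 :: S3 and u v w :: S
  assumes homog_r1: "homog3 d1 r1" and homog_r2: "homog3 d2 r2" and homog_r3: "homog3 d2 r3"
    and syzygy_r1: "r1 \<in> AR (defpoly L)"
    and generators: "\<forall>r\<in>AR (defpoly L). \<exists>A B C. r = lincomb3 A B C r1 r2 r3"
    and homog_u: "homog (d2 + 1 - d1) u"
    and relations: "\<forall>A B C. lincomb3 A B C r1 r2 r3 = (0, 0, 0) \<longleftrightarrow>
      (\<exists>k. (A, B, C) = (k * u, k * v, k * w))"
    and d1_le_d2: "d1 \<le> d2"
begin

lemma r1_nonzero: "r1 \<noteq> (0, 0, 0)"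
proof
  assume "r1 = (0, 0, 0)"
  then have "lincomb3 1 0 0 r1 r2 r3 = (0, 0, 0)"
    by simp
  then obtain k where "(1, 0, 0) = (k * u, k * v, k * w)"
    using relations by blast
  then have "u * k = 1"
    by (simp add: mult.commute)
  then show False
    using homog_unit_imp_deg_0[OF homog_u] d1_le_d2 by simp
qed

lemma d1_le: "d1 \<le> d - m"
proof -
  have "theta0 \<in> AR f"
    using deriv_along_theta0 by (simp add: mem_AR_iff)
  then obtain A B C where "theta0 = lincomb3 A B C r1 r2 r3"
    using generators by blast
  then show ?thesis
    by (rule theta0_in_span(1)[OF homog_r1 homog_r2 homog_r3 d1_le_d2])
qed

text \<open>When \<open>d = 2m\<close> and \<open>d\<^sub>1 = m - 1\<close>, \<open>\<theta>\<^sub>0\<close> is a multiple of \<open>r\<^sub>1\<close>, which is then a multiple of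
  \<open>\<theta>\<^sub>0\<close> of smaller degree.\<close>

lemma mult_eq_d2:
  assumes "d1 + d2 = d" "d \<le> 2 * m"
  shows "m = d2"
proof -
  have r1: "deriv_along r1 f = 0"
    using syzygy_r1 by (simp add: mem_AR_iff)
  have not_small: "\<not> (d1 < d - m \<and> d1 + 1 < m)"
    using small_syzygy_eq_0[OF r1 homog_r1] r1_nonzero by blast
  show ?thesis
  proof (cases "d1 = d - m")
    case True
    then show ?thesis
      using assms m_le_d by simp
  next
    case False
    then have d1: "d1 + 1 = m" "d = 2 * m"
      using d1_le not_small assms by auto
    have "theta0 \<in> AR f"
      using deriv_along_theta0 by (simp add: mem_AR_iff)
    then obtain A B C where "theta0 = lincomb3 A B C r1 r2 r3"
      using generators by blast
    then have "det_pxr p r1 = 0"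
      using theta0_in_span(2)[OF homog_r1 homog_r2 homog_r3 d1_le_d2] d1 assms(1) by simp
    then have "r1 = (0, 0, 0)"
      using syzygy_det_zero_low_degree_eq_0[OF r1 _ homog_r1] d1 by simp
    then show ?thesis
      using r1_nonzero by simp
  qed
qed

end

lemma (in arrangement_point) free_imp_mult_eq:
  assumes "is_free L d1 d2" "d1 \<le> d2" "d < 2 * m"
  shows "m = d2 + 1"
proof -
  obtain r1 r2 where "homog3 d1 r1" "homog3 d2 r2" "r1 \<in> AR f" "r2 \<in> AR f"
    "\<forall>r\<in>AR f. \<exists>!pq. r = tadd (tsmul (fst pq) r1) (tsmul (snd pq) r2)"
    using assms(1) unfolding is_free_def Let_def by blast
  then interpret free_arrangement_point L p d1 d2 r1 r2
    using assms(2) by unfold_locales simp_all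
  show ?thesis
    using mult_eq_Suc_d2 assms(3) .
qed

lemma (in arrangement_point) nearly_free_imp_mult_eq:
  assumes "is_nearly_free L d1 d2" "d1 \<le> d2" "d \<le> 2 * m"
  shows "m = d2"
proof -
  obtain r1 r2 r3 u v w where "homog3 d1 r1" "homog3 d2 r2" "homog3 d2 r3" "r1 \<in> AR f"
    "\<forall>r\<in>AR f. \<exists>A B C. r = lincomb3 A B C r1 r2 r3" "homog (d2 + 1 - d1) u"
    "\<forall>A B C. lincomb3 A B C r1 r2 r3 = (0, 0, 0) \<longleftrightarrow> (\<exists>k. (A, B, C) = (k * u, k * v, k * w))"
    using assms(1) unfolding is_nearly_free_def Let_def by blast
  then interpret nearly_free_arrangement_point L p d1 d2 r1 r2 r3 u v w
    using assms(2) by unfold_locales simp_all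
  show ?thesis
    using mult_eq_d2 assms(1,3) by (simp add: is_nearly_free_def d_def)
qed

theorem corollary2p3:
  fixes L :: "lform list" and p :: lform and d d1 d2 m :: nat
  assumes "arrangement L" and "d = length L"
    and "intersection_point L p" and "m = mult_pt L p"
  shows "(is_free L d1 d2 \<and> d1 \<le> d2 \<and> real m > real d / 2 \<longrightarrow> m = d2 + 1) \<and>
         (is_nearly_free L d1 d2 \<and> d1 \<le> d2 \<and> real m \<ge> real d / 2 \<longrightarrow> m = d2)"
proof -
  interpret A: arrangement_point L p
    using assms(1,3) by unfold_locales (auto simp: intersection_point_def)
  have m: "m = A.m" and d: "d = A.d"
    using assms(2,4) A.mult_pt_eq by (simp_all add: A.d_def)
  show ?thesis
  proof (intro conjI impI)
    assume "is_free L d1 d2 \<and> d1 \<le> d2 \<and> real m > real d / 2"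
    then show "m = d2 + 1"
      using A.free_imp_mult_eq[of d1 d2] m d by simp
  next
    assume "is_nearly_free L d1 d2 \<and> d1 \<le> d2 \<and> real m \<ge> real d / 2"
    then show "m = d2"
      using A.nearly_free_imp_mult_eq[of d1 d2] m d by simp
  qed
qed

end
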